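(* Let $A$ be a commutative associative 0-dialgebra with involution over a field $\mathbb{F}$. On $A\oplus A$ define $(a,b)\dashv(c,d)=(a\dashv c-d\vdash b^\ast,\; a^\ast\dashv d+c\vdash b)$, $(a,b)\vdash(c,d)=(a\vdash c-d\dashv b^\ast,\; a^\ast\vdash d+c\dashv b)$ and $(a,b)^\ast=(a^\ast,-b)$. Then $A\oplus A$ with these operations is an associative 0-dialgebra with involution.
   Context: A 0-dialgebra is a vector space with bilinear operations $\dashv,\vdash$ satisfying $a\dashv(b\dashv c)=a\dashv(b\vdash c)$ and $(a\dashv b)\vdash c=(a\vdash b)\vdash c$. It is commutative if $a\dashv b=b\vdash a$ for all $a,b$. It is associative if $(a\dashv b)\dashv c=a\dashv(b\dashv c)$, $(a\vdash b)\dashv c=a\vdash(b\dashv c)$ and $(a\vdash b)\vdash c=a\vdash(b\vdash c)$ for all $a,b,c$. An involution is a linear map $\ast$ with $(a^\ast)^\ast=a$, $(a\dashv b)^\ast=b^\ast\vdash a^\ast$, $(a\vdash b)^\ast=b^\ast\dashv a^\ast$. *)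

theory Defs
  imports Complex_Main "HOL-Library.Product_Plus"
begin

text \<open>Operations: l = left product (dashv), r = right product (vdash), s = involution.\<close>

definition bilinear_op :: "('k::field \<Rightarrow> 'v::ab_group_add \<Rightarrow> 'v) \<Rightarrow> ('v \<Rightarrow> 'v \<Rightarrow> 'v) \<Rightarrow> bool" where
  "bilinear_op scl f \<longleftrightarrow>
     (\<forall>x. Vector_Spaces.linear scl scl (f x)) \<and> (\<forall>y. Vector_Spaces.linear scl scl (\<lambda>x. f x y))"

definition zero_dialgebra :: "('k::field \<Rightarrow> 'v::ab_group_add \<Rightarrow> 'v) \<Rightarrow> ('v \<Rightarrow> 'v \<Rightarrow> 'v) \<Rightarrow> ('v \<Rightarrow> 'v \<Rightarrow> 'v) \<Rightarrow> bool" where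
  "zero_dialgebra scl l r \<longleftrightarrow>
     vector_space scl \<and> bilinear_op scl l \<and> bilinear_op scl r \<and>
     (\<forall>a b c. l a (l b c) = l a (r b c)) \<and>
     (\<forall>a b c. r (l a b) c = r (r a b) c)"

definition commutative_dialgebra :: "('v \<Rightarrow> 'v \<Rightarrow> 'v) \<Rightarrow> ('v \<Rightarrow> 'v \<Rightarrow> 'v) \<Rightarrow> bool" where
  "commutative_dialgebra l r \<longleftrightarrow> (\<forall>a b. l a b = r b a)"

definition associative_dialgebra :: "('v \<Rightarrow> 'v \<Rightarrow> 'v) \<Rightarrow> ('v \<Rightarrow> 'v \<Rightarrow> 'v) \<Rightarrow> bool" where
  "associative_dialgebra l r \<longleftrightarrow>
     (\<forall>a b c. l (l a b) c = l a (l b c)) \<and>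
     (\<forall>a b c. l (r a b) c = r a (l b c)) \<and>
     (\<forall>a b c. r (r a b) c = r a (r b c))"

definition dialgebra_involution :: "('k::field \<Rightarrow> 'v::ab_group_add \<Rightarrow> 'v) \<Rightarrow> ('v \<Rightarrow> 'v \<Rightarrow> 'v) \<Rightarrow> ('v \<Rightarrow> 'v \<Rightarrow> 'v) \<Rightarrow> ('v \<Rightarrow> 'v) \<Rightarrow> bool" where
  "dialgebra_involution scl l r s \<longleftrightarrow>
     Vector_Spaces.linear scl scl s \<and>
     (\<forall>a. s (s a) = a) \<and>
     (\<forall>a b. s (l a b) = r (s b) (s a)) \<and>
     (\<forall>a b. s (r a b) = l (s b) (s a))"

definition dsum_scale :: "('k \<Rightarrow> 'v \<Rightarrow> 'v) \<Rightarrow> 'k \<Rightarrow> 'v \<times> 'v \<Rightarrow> 'v \<times> 'v" where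
  "dsum_scale scl c p = (scl c (fst p), scl c (snd p))"

definition dbl_l :: "('v::ab_group_add \<Rightarrow> 'v \<Rightarrow> 'v) \<Rightarrow> ('v \<Rightarrow> 'v \<Rightarrow> 'v) \<Rightarrow> ('v \<Rightarrow> 'v) \<Rightarrow> 'v \<times> 'v \<Rightarrow> 'v \<times> 'v \<Rightarrow> 'v \<times> 'v" where
  "dbl_l l r s p q = (case p of (a, b) \<Rightarrow> case q of (c, d) \<Rightarrow>
      (l a c - r d (s b), l (s a) d + r c b))"

definition dbl_r :: "('v::ab_group_add \<Rightarrow> 'v \<Rightarrow> 'v) \<Rightarrow> ('v \<Rightarrow> 'v \<Rightarrow> 'v) \<Rightarrow> ('v \<Rightarrow> 'v) \<Rightarrow> 'v \<times> 'v \<Rightarrow> 'v \<times> 'v \<Rightarrow> 'v \<times> 'v" where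
  "dbl_r l r s p q = (case p of (a, b) \<Rightarrow> case q of (c, d) \<Rightarrow>
      (r a c - l d (s b), r (s a) d + l c b))"

definition dbl_star :: "('v::ab_group_add \<Rightarrow> 'v) \<Rightarrow> 'v \<times> 'v \<Rightarrow> 'v \<times> 'v" where
  "dbl_star s p = (case p of (a, b) \<Rightarrow> (s a, - b))"

end

theory Submission
  imports Defs
begin

text \<open>Commutativity turns \<open>a \<turnstile> b\<close> into \<open>b \<stileturn> a\<close>, so everything can be expressed through
  \<open>\<stileturn>\<close> alone. The 0-dialgebra axiom then says that \<open>a \<stileturn> (b \<stileturn> c)\<close> is symmetric in \<open>b, c\<close>,
  associativity lets every product be written left-nested, and the involution becomes an
  automorphism of \<open>\<stileturn>\<close>. In this normal form every dialgebra identity of \<open>A \<oplus> A\<close> becomes,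
  componentwise, an identity between sums of normalised products. The involution axioms of
  \<open>A \<oplus> A\<close> hold for any involution, commutative or not.\<close>

lemma bilinear_op_simps:
  assumes "bilinear_op scl f"
  shows "f x (y + z) = f x y + f x z" "f (x + y) z = f x z + f y z"
    and "f x (- y) = - f x y" "f (- x) z = - f x z"
    and "f x (y - z) = f x y - f x z" "f (x - y) z = f x z - f y z"
    and "f x (scl c y) = scl c (f x y)" "f (scl c x) z = scl c (f x z)"
proof -
  have right: "module_hom scl scl (f x)" and left: "module_hom scl scl (\<lambda>x. f x z)"
    using assms by (simp_all add: bilinear_op_def module_hom_iff_linear)
  show "f x (y + z) = f x y + f x z" "f x (- y) = - f x y" "f x (y - z) = f x y - f x z"
    "f x (scl c y) = scl c (f x y)"
    using module_hom.add[OF right] module_hom.neg[OF right] module_hom.diff[OF right]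
      module_hom.scale[OF right] by blast+
  show "f (x + y) z = f x z + f y z" "f (- x) z = - f x z" "f (x - y) z = f x z - f y z"
    "f (scl c x) z = scl c (f x z)"
    using module_hom.add[OF left] module_hom.neg[OF left] module_hom.diff[OF left]
      module_hom.scale[OF left] by blast+
qed

lemma dialgebra_involution_simps:
  assumes "dialgebra_involution scl l r s"
  shows "s (s a) = a" "s (x + y) = s x + s y" "s (- x) = - s x" "s (x - y) = s x - s y"
proof -
  interpret module_hom scl scl s
    using assms by (simp add: dialgebra_involution_def module_hom_iff_linear)
  show "s (s a) = a"
    using assms by (simp add: dialgebra_involution_def)
  show "s (x + y) = s x + s y" "s (- x) = - s x" "s (x - y) = s x - s y"
    by (fact add neg diff)+
qed

lemma dialgebra_involution_flip:
  "dialgebra_involution scl r l s \<longleftrightarrow> dialgebra_involution scl l r s"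
  by (auto simp: dialgebra_involution_def)

lemma commutative_zero_dialgebra_simps:
  assumes "zero_dialgebra scl l r" "commutative_dialgebra l r"
  shows "r a b = l b a" "l a (l b c) = l a (l c b)"
proof -
  show r: "r a b = l b a" for a b
    using assms(2) by (simp add: commutative_dialgebra_def)
  show "l a (l b c) = l a (l c b)"
    using assms(1) by (simp add: zero_dialgebra_def r)
qed

lemma commutative_associative_dialgebra_simps:
  assumes "zero_dialgebra scl l r" "commutative_dialgebra l r" "associative_dialgebra l r"
  shows "l a (l b c) = l (l a b) c" "l (l a b) c = l (l a c) b"
proof -
  show assoc: "l a (l b c) = l (l a b) c" for a b c
    using assms(3) by (simp add: associative_dialgebra_def)
  show "l (l a b) c = l (l a c) b"
    using commutative_zero_dialgebra_simps(2)[OF assms(1,2)] by (simp add: assoc)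
qed

lemma commutative_dialgebra_involution_mult:
  assumes "commutative_dialgebra l r" "dialgebra_involution scl l r s"
  shows "s (l a b) = l (s a) (s b)"
  using assms by (simp add: commutative_dialgebra_def dialgebra_involution_def)

lemma vector_space_dsum_scale: "vector_space scl \<Longrightarrow> vector_space (dsum_scale scl)"
  by (simp add: vector_space_def dsum_scale_def)

lemma dbl_r_eq_dbl_l_flip: "dbl_r l r s = dbl_l r l s"
  by (simp add: fun_eq_iff dbl_l_def dbl_r_def)

lemma bilinear_op_dbl_l:
  assumes l: "bilinear_op scl l" and r: "bilinear_op scl r"
    and s: "Vector_Spaces.linear scl scl s"
  shows "bilinear_op (dsum_scale scl) (dbl_l l r s)"
proof -
  interpret module_hom scl scl s
    using s by (simp add: module_hom_iff_linear)
  have "vector_space scl" "vector_space (dsum_scale scl)"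
    using s by (simp_all add: Vector_Spaces.linear_iff vector_space_dsum_scale)
  then show ?thesis
    unfolding bilinear_op_def Vector_Spaces.linear_iff
    by (auto simp: dbl_l_def dsum_scale_def bilinear_op_simps[OF l] bilinear_op_simps[OF r]
        add scale m1.scale_right_diff_distrib m1.scale_right_distrib split: prod.splits)
qed

lemma linear_dbl_star:
  assumes "Vector_Spaces.linear scl scl s"
  shows "Vector_Spaces.linear (dsum_scale scl) (dsum_scale scl) (dbl_star s)"
proof -
  interpret module_hom scl scl s
    using assms by (simp add: module_hom_iff_linear)
  show ?thesis
    using assms by (auto simp: Vector_Spaces.linear_iff vector_space_dsum_scale
        dbl_star_def dsum_scale_def add scale)
qed

lemma dbl_star_dbl_l:
  assumes l: "bilinear_op scl l" and r: "bilinear_op scl r"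
    and inv: "dialgebra_involution scl l r s"
  shows "dbl_star s (dbl_l l r s p q) = dbl_r l r s (dbl_star s q) (dbl_star s p)"
  using inv by (simp add: dialgebra_involution_def dbl_l_def dbl_r_def dbl_star_def
      dialgebra_involution_simps[OF inv] bilinear_op_simps[OF l] bilinear_op_simps[OF r]
      split: prod.splits)

lemma dialgebra_involution_dbl_star:
  assumes l: "bilinear_op scl l" and r: "bilinear_op scl r"
    and inv: "dialgebra_involution scl l r s"
  shows "dialgebra_involution (dsum_scale scl) (dbl_l l r s) (dbl_r l r s) (dbl_star s)"
proof -
  have "dbl_star s (dbl_r l r s p q) = dbl_l l r s (dbl_star s q) (dbl_star s p)" for p q
    using dbl_star_dbl_l[OF r l] inv
    by (simp add: dbl_r_eq_dbl_l_flip dialgebra_involution_flip)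
  moreover have "dbl_star s (dbl_star s p) = p" for p
    by (simp add: dbl_star_def dialgebra_involution_simps[OF inv] split: prod.splits)
  ultimately show ?thesis
    using inv by (simp add: dialgebra_involution_def linear_dbl_star dbl_star_dbl_l[OF l r])
qed

lemma zero_dialgebra_dbl:
  assumes dialg: "zero_dialgebra scl l r" and comm: "commutative_dialgebra l r"
    and inv: "dialgebra_involution scl l r s"
  shows "zero_dialgebra (dsum_scale scl) (dbl_l l r s) (dbl_r l r s)"
proof -
  have l: "bilinear_op scl l" and r: "bilinear_op scl r" and "vector_space scl"
    using dialg by (simp_all add: zero_dialgebra_def)
  moreover have "Vector_Spaces.linear scl scl s"
    using inv by (simp add: dialgebra_involution_def)
  ultimately have "bilinear_op (dsum_scale scl) (dbl_l l r s)"
    "bilinear_op (dsum_scale scl) (dbl_r l r s)" "vector_space (dsum_scale scl)"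
    using bilinear_op_dbl_l[OF l r] bilinear_op_dbl_l[OF r l]
    by (simp_all add: dbl_r_eq_dbl_l_flip vector_space_dsum_scale)
  moreover note normalise = commutative_zero_dialgebra_simps[OF dialg comm]
    commutative_dialgebra_involution_mult[OF comm inv]
    dialgebra_involution_simps[OF inv] bilinear_op_simps[OF l]
  ultimately show ?thesis
    unfolding zero_dialgebra_def
    by (simp add: split_paired_all dbl_l_def dbl_r_def normalise algebra_simps)
qed

lemma associative_dialgebra_dbl:
  assumes dialg: "zero_dialgebra scl l r" and comm: "commutative_dialgebra l r"
    and assoc: "associative_dialgebra l r" and inv: "dialgebra_involution scl l r s"
  shows "associative_dialgebra (dbl_l l r s) (dbl_r l r s)"
proof -
  have l: "bilinear_op scl l"
    using dialg by (simp add: zero_dialgebra_def)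
  note normalise = commutative_zero_dialgebra_simps(1)[OF dialg comm]
    commutative_associative_dialgebra_simps[OF dialg comm assoc]
    commutative_dialgebra_involution_mult[OF comm inv]
    dialgebra_involution_simps[OF inv] bilinear_op_simps[OF l]
  show ?thesis
    unfolding associative_dialgebra_def
    by (simp add: split_paired_all dbl_l_def dbl_r_def normalise algebra_simps)
qed

theorem theorem4p2:
  fixes scl :: "'k::field \<Rightarrow> 'v::ab_group_add \<Rightarrow> 'v"
    and l r :: "'v \<Rightarrow> 'v \<Rightarrow> 'v"
    and s :: "'v \<Rightarrow> 'v"
  assumes "zero_dialgebra scl l r"
    and "commutative_dialgebra l r"
    and "associative_dialgebra l r"
    and "dialgebra_involution scl l r s"
  shows "zero_dialgebra (dsum_scale scl) (dbl_l l r s) (dbl_r l r s)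
       \<and> associative_dialgebra (dbl_l l r s) (dbl_r l r s)
       \<and> dialgebra_involution (dsum_scale scl) (dbl_l l r s) (dbl_r l r s) (dbl_star s)"
proof -
  have "bilinear_op scl l" "bilinear_op scl r"
    using assms(1) by (simp_all add: zero_dialgebra_def)
  then show ?thesis
    using assms zero_dialgebra_dbl associative_dialgebra_dbl dialgebra_involution_dbl_star
    by blast
qed

end
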